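(* Let $r=\frac{2}{3\sqrt{3}}$. Then $$\mathcal{P}^3=\{c_1+c_4\mathbf{j_1}+c_6\mathbf{j_2} : c_1,c_4,c_6\in\mathbb{R},\ |c_1|+|c_4|+|c_6|\leq r\};$$ that is, under the identification $c_1+c_4\mathbf{j_1}+c_6\mathbf{j_2}\leftrightarrow(c_1,c_4,c_6)\in\mathbb{R}^3$, the Perplexbric is the regular octahedron centered at the origin with vertices $\pm r$ on the coordinate axes, whose edges have length $\frac{2\sqrt{2}}{3\sqrt{3}}$.
   Context: The tricomplex numbers $\mathbb{M}(3)$ form the commutative real algebra generated by commuting units $\mathbf{i_1},\mathbf{i_2},\mathbf{i_3}$ with $\mathbf{i_k}^2=-1$; set $\mathbf{j_1}=\mathbf{i_1}\mathbf{i_2}$, $\mathbf{j_2}=\mathbf{i_1}\mathbf{i_3}$, $\mathbf{j_3}=\mathbf{i_2}\mathbf{i_3}$, $\mathbf{i_4}=\mathbf{i_1}\mathbf{i_2}\mathbf{i_3}$, with real basis $1,\mathbf{i_1},\mathbf{i_2},\mathbf{i_3},\mathbf{i_4},\mathbf{j_1},\mathbf{j_2},\mathbf{j_3}$ and Euclidean norm on coordinates. For $c\in\mathbb{M}(3)$, $Q_{3,c}(\eta)=\eta^3+c$ and $Q_{3,c}^m$ is its $m$-fold iterate. The Perplexbric is $\mathcal{P}^3=\{c=c_1+c_4\mathbf{j_1}+c_6\mathbf{j_2} : c_1,c_4,c_6\in\mathbb{R},\ (Q_{3,c}^m(0))_{m\geq1}\text{ bounded}\}$. *)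

theory Defs
  imports Complex_Main
begin

(* Tricomplex numbers M(3): an element is represented by its 8 real coordinates
   x 0 .. x 7, indexed by bitmasks S \<subseteq> {1,2,3} (bit 0 = i1, bit 1 = i2, bit 2 = i3).
   Basis: 0 = 1, 1 = i1, 2 = i2, 4 = i3, 3 = j1 = i1 i2, 5 = j2 = i1 i3,
   6 = j3 = i2 i3, 7 = i4 = i1 i2 i3.  Coordinates at indices >= 8 are ignored
   (and are 0 for every element we build). *)
type_synonym tricomplex = "nat \<Rightarrow> real"

(* e_S * e_T = (-1)^|S \<inter> T| * e_(S xor T), since the units commute and square to -1 *)
definition tc_sign :: "nat \<Rightarrow> nat \<Rightarrow> real" where
  "tc_sign a b = (-1) ^ card {i. i < 3 \<and> bit a i \<and> bit b i}"

definition tc_mult :: "tricomplex \<Rightarrow> tricomplex \<Rightarrow> tricomplex" where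
  "tc_mult x y = (\<lambda>k. if k < 8
      then (\<Sum>a<8. tc_sign a (xor a k) * x a * y (xor a k))
      else 0)"

definition tc_add :: "tricomplex \<Rightarrow> tricomplex \<Rightarrow> tricomplex" where
  "tc_add x y = (\<lambda>k. if k < 8 then x k + y k else 0)"

definition tc_zero :: tricomplex where
  "tc_zero = (\<lambda>k. 0)"

definition tc_norm :: "tricomplex \<Rightarrow> real" where
  "tc_norm x = sqrt (\<Sum>k<8. (x k)\<^sup>2)"

definition Q3 :: "tricomplex \<Rightarrow> tricomplex \<Rightarrow> tricomplex" where
  "Q3 c \<eta> = tc_add (tc_mult (tc_mult \<eta> \<eta>) \<eta>) c"

definition tc_of :: "real \<Rightarrow> real \<Rightarrow> real \<Rightarrow> tricomplex" where
  "tc_of c1 c4 c6 = (\<lambda>k. if k = 0 then c1 else if k = 3 then c4 else if k = 5 then c6 else 0)"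

definition perplexbric :: "tricomplex set" where
  "perplexbric = {tc_of c1 c4 c6 | c1 c4 c6.
      \<exists>B. \<forall>m\<ge>1. tc_norm ((Q3 (tc_of c1 c4 c6) ^^ m) tc_zero) \<le> B}"

end

theory Submission
  imports Defs
begin

(* The elements c = c1 + c4 j1 + c6 j2 lie in the subalgebra H spanned by 1, j1, j2, j3,
   in which j1^2 = j2^2 = 1 and j1 j2 = -j3.  H has four real characters hchar s t (s, t = +-1),
   sending j1 to s, j2 to t and j3 to -s t; together they identify H with R^4 coordinatewise.
   H is closed under Q_{3,c}, so hchar s t maps the orbit of 0 under Q_{3,c} onto the orbit of 0
   under the real cubic x |-> x^3 + hchar s t c.  On H the Euclidean norm and the four values
   |hchar s t| bound each other, hence the tricomplex orbit is bounded iff the four real orbits are.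
   A real orbit of x^3 + a starting at 0 is bounded iff |a| <= 2/(3 sqrt 3): with q = 1/sqrt 3,
   the interval [-q, q] is invariant when |a| <= 2 q^3, while for a > 2 q^3 the orbit grows at
   least linearly.  Finally |c1 +- c4 +- c6| <= r for all four sign choices iff
   |c1| + |c4| + |c6| <= r. *)

section \<open>The subalgebra spanned by 1, j1, j2, j3\<close>

(* Coordinates 0, 3, 5, 6 hold the components along 1, j1, j2, j3. *)
definition hyperbolic :: "tricomplex \<Rightarrow> bool" where
  "hyperbolic x \<longleftrightarrow> x 1 = 0 \<and> x 2 = 0 \<and> x 4 = 0 \<and> x 7 = 0 \<and> (\<forall>k\<ge>8. x k = 0)"

lemma card_below_3:
  "card {i::nat. i < 3 \<and> P i} = of_bool (P 0) + of_bool (P 1) + of_bool (P 2)"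
proof -
  have "card {i::nat. i < 3 \<and> P i} = (\<Sum>i<3. of_bool (P i))"
    using sum_of_bool_eq[of "{..<3::nat}" P] by (simp add: Collect_conj_eq lessThan_def Int_commute)
  also have "\<dots> = of_bool (P 0) + of_bool (P 1) + of_bool (P 2)"
    by (simp add: numeral_3_eq_3 numeral_2_eq_2)
  finally show ?thesis .
qed

(* Normal form of bit tests on 1, which the simplifier writes as Suc 0. *)
lemma bit_Suc_0_nat [simp]: "bit (Suc 0) n \<longleftrightarrow> n = 0"
  using bit_1_iff[where 'a = nat, of n] by simp

lemma sum_below_8:
  fixes f :: "nat \<Rightarrow> real"
  shows "(\<Sum>a<8. f a) = f 0 + f 1 + f 2 + f 3 + f 4 + f 5 + f 6 + f 7"
  by (simp add: eval_nat_numeral)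

(* Multiplication table of H: 1 is the unit, j1^2 = j2^2 = j3^2 = 1, j1 j2 = -j3, j1 j3 = -j2,
   j2 j3 = -j1; in particular H is closed under multiplication. *)
lemma tc_mult_hyperbolic:
  assumes "hyperbolic x" and "hyperbolic y"
  shows "tc_mult x y 0 = x 0 * y 0 + x 3 * y 3 + x 5 * y 5 + x 6 * y 6"
    and "tc_mult x y 3 = x 0 * y 3 + x 3 * y 0 - x 5 * y 6 - x 6 * y 5"
    and "tc_mult x y 5 = x 0 * y 5 + x 5 * y 0 - x 3 * y 6 - x 6 * y 3"
    and "tc_mult x y 6 = x 0 * y 6 + x 6 * y 0 - x 3 * y 5 - x 5 * y 3"
    and "hyperbolic (tc_mult x y)"
  using assms
  by (simp_all add: hyperbolic_def tc_mult_def sum_below_8 tc_sign_def card_below_3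
      flip: numeral_3_eq_3)

lemma hyperbolic_tc_add: "hyperbolic x \<Longrightarrow> hyperbolic y \<Longrightarrow> hyperbolic (tc_add x y)"
  by (simp add: hyperbolic_def tc_add_def)

lemma hyperbolic_tc_zero: "hyperbolic tc_zero"
  by (simp add: hyperbolic_def tc_zero_def)

lemma hyperbolic_tc_of: "hyperbolic (tc_of c1 c4 c6)"
  by (simp add: hyperbolic_def tc_of_def)

lemma hyperbolic_Q3: "hyperbolic c \<Longrightarrow> hyperbolic x \<Longrightarrow> hyperbolic (Q3 c x)"
  by (simp add: Q3_def hyperbolic_tc_add tc_mult_hyperbolic(5))

section \<open>The four real characters of H\<close>

definition hchar :: "real \<Rightarrow> real \<Rightarrow> tricomplex \<Rightarrow> real" where
  "hchar s t x = x 0 + s * x 3 + t * x 5 - s * t * x 6"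

lemma hchar_tc_add: "hchar s t (tc_add x y) = hchar s t x + hchar s t y"
  by (simp add: hchar_def tc_add_def algebra_simps)

lemma hchar_tc_mult:
  assumes "s \<in> {-1, 1}" and "t \<in> {-1, 1}" and "hyperbolic x" and "hyperbolic y"
  shows "hchar s t (tc_mult x y) = hchar s t x * hchar s t y"
  using assms by (auto simp: hchar_def tc_mult_hyperbolic algebra_simps)

lemma hchar_tc_of: "hchar s t (tc_of c1 c4 c6) = c1 + s * c4 + t * c6"
  by (simp add: hchar_def tc_of_def)

lemma hchar_Q3:
  assumes "s \<in> {-1, 1}" and "t \<in> {-1, 1}" and "hyperbolic c" and "hyperbolic x"
  shows "hchar s t (Q3 c x) = hchar s t x ^ 3 + hchar s t c"
  using assms
  by (simp add: Q3_def hchar_tc_add hchar_tc_mult tc_mult_hyperbolic(5) power3_eq_cube)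

definition cubic_orbit :: "real \<Rightarrow> nat \<Rightarrow> real" where
  "cubic_orbit a m = ((\<lambda>x. x ^ 3 + a) ^^ m) 0"

lemma cubic_orbit_0 [simp]: "cubic_orbit a 0 = 0"
  by (simp add: cubic_orbit_def)

lemma cubic_orbit_Suc: "cubic_orbit a (Suc m) = cubic_orbit a m ^ 3 + a"
  by (simp add: cubic_orbit_def)

lemma hchar_orbit:
  assumes "s \<in> {-1, 1}" and "t \<in> {-1, 1}" and "hyperbolic c"
  shows "hyperbolic ((Q3 c ^^ m) tc_zero) \<and>
    hchar s t ((Q3 c ^^ m) tc_zero) = cubic_orbit (hchar s t c) m"
proof (induction m)
  case 0
  show ?case by (simp add: hyperbolic_tc_zero) (simp add: hchar_def tc_zero_def)
next
  case (Suc m)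
  then show ?case
    using assms
    by (simp add: hyperbolic_Q3 hchar_Q3 cubic_orbit_Suc)
qed

section \<open>Comparing the norm with the characters\<close>

lemma tc_norm_hyperbolic:
  "hyperbolic x \<Longrightarrow> tc_norm x = sqrt (x 0 ^ 2 + x 3 ^ 2 + x 5 ^ 2 + x 6 ^ 2)"
  by (simp add: tc_norm_def hyperbolic_def sum_below_8)

lemma sum_hchar_squares:
  "hchar 1 1 x ^ 2 + hchar 1 (-1) x ^ 2 + hchar (-1) 1 x ^ 2 + hchar (-1) (-1) x ^ 2 =
    4 * (x 0 ^ 2 + x 3 ^ 2 + x 5 ^ 2 + x 6 ^ 2)"
  by (simp add: hchar_def power2_eq_square algebra_simps)

lemma hchar_le_norm:
  assumes "s \<in> {-1, 1}" and "t \<in> {-1, 1}" and "hyperbolic x"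
  shows "\<bar>hchar s t x\<bar> \<le> 2 * tc_norm x"
proof -
  let ?S = "x 0 ^ 2 + x 3 ^ 2 + x 5 ^ 2 + x 6 ^ 2"
  have "hchar s t x ^ 2 \<le> 4 * ?S"
    unfolding sum_hchar_squares[symmetric] using assms(1,2) by auto
  then have "sqrt (hchar s t x ^ 2) \<le> sqrt (4 * ?S)"
    by (rule real_sqrt_le_mono)
  also have "sqrt (4 * ?S) = 2 * sqrt ?S"
    by (subst real_sqrt_mult) simp
  finally show ?thesis
    using assms(3) by (simp add: tc_norm_hyperbolic)
qed

lemma sum_squares_le_square_sum:
  fixes a b c d :: real
  shows "a\<^sup>2 + b\<^sup>2 + c\<^sup>2 + d\<^sup>2 \<le> (\<bar>a\<bar> + \<bar>b\<bar> + \<bar>c\<bar> + \<bar>d\<bar>)\<^sup>2"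
proof -
  have "(\<bar>a\<bar> + \<bar>b\<bar> + \<bar>c\<bar> + \<bar>d\<bar>)\<^sup>2 = a\<^sup>2 + b\<^sup>2 + c\<^sup>2 + d\<^sup>2 +
      2 * (\<bar>a\<bar> * \<bar>b\<bar> + \<bar>a\<bar> * \<bar>c\<bar> + \<bar>a\<bar> * \<bar>d\<bar> + \<bar>b\<bar> * \<bar>c\<bar> + \<bar>b\<bar> * \<bar>d\<bar> + \<bar>c\<bar> * \<bar>d\<bar>)"
    by (simp add: power2_eq_square algebra_simps)
  then show ?thesis by simp
qed

lemma norm_le_sum_hchar:
  assumes "hyperbolic x"
  shows "tc_norm x \<le>
    \<bar>hchar 1 1 x\<bar> + \<bar>hchar 1 (-1) x\<bar> + \<bar>hchar (-1) 1 x\<bar> + \<bar>hchar (-1) (-1) x\<bar>"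
    (is "_ \<le> ?T")
proof -
  let ?S = "x 0 ^ 2 + x 3 ^ 2 + x 5 ^ 2 + x 6 ^ 2"
  have "?S \<le> 4 * ?S" by simp
  also have "\<dots> \<le> ?T ^ 2"
    unfolding sum_hchar_squares[symmetric] by (rule sum_squares_le_square_sum)
  finally have "sqrt ?S \<le> ?T" by (simp add: real_le_lsqrt)
  then show ?thesis using assms by (simp add: tc_norm_hyperbolic)
qed

lemma bounded_iff_hchar_bounded:
  assumes "\<And>m. hyperbolic (z m)"
  shows "(\<exists>B. \<forall>m\<ge>1. tc_norm (z m) \<le> B) \<longleftrightarrow>
    (\<forall>s\<in>{-1, 1}. \<forall>t\<in>{-1, 1}. \<exists>B. \<forall>m\<ge>1. \<bar>hchar s t (z m)\<bar> \<le> B)"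
proof
  assume "\<exists>B. \<forall>m\<ge>1. tc_norm (z m) \<le> B"
  then obtain B where "\<And>m. m \<ge> 1 \<Longrightarrow> tc_norm (z m) \<le> B" by blast
  then show "\<forall>s\<in>{-1, 1}. \<forall>t\<in>{-1, 1}. \<exists>B. \<forall>m\<ge>1. \<bar>hchar s t (z m)\<bar> \<le> B"
    using hchar_le_norm[OF _ _ assms] by (meson order_trans mult_left_mono zero_le_numeral)
next
  assume bounded: "\<forall>s\<in>{-1, 1}. \<forall>t\<in>{-1, 1}. \<exists>B. \<forall>m\<ge>1. \<bar>hchar s t (z m)\<bar> \<le> B"
  obtain B1 where B1: "\<forall>m\<ge>1. \<bar>hchar 1 1 (z m)\<bar> \<le> B1" using bounded by auto
  obtain B2 where B2: "\<forall>m\<ge>1. \<bar>hchar 1 (-1) (z m)\<bar> \<le> B2" using bounded by auto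
  obtain B3 where B3: "\<forall>m\<ge>1. \<bar>hchar (-1) 1 (z m)\<bar> \<le> B3" using bounded by auto
  obtain B4 where B4: "\<forall>m\<ge>1. \<bar>hchar (-1) (-1) (z m)\<bar> \<le> B4" using bounded by auto
  have "tc_norm (z m) \<le> B1 + B2 + B3 + B4" if "m \<ge> 1" for m
    using norm_le_sum_hchar[OF assms, of m] B1 B2 B3 B4 that by fastforce
  then show "\<exists>B. \<forall>m\<ge>1. tc_norm (z m) \<le> B" by blast
qed

section \<open>Bounded orbits of the real cubic\<close>

(* The critical point q = 1/sqrt 3 of x^3 - x and the critical value 2 q^3 = 2/(3 sqrt 3). *)
lemma critical_point:
  "1 / sqrt 3 > 0" "3 * (1 / sqrt 3) ^ 2 = 1" "2 / (3 * sqrt 3) = 2 * (1 / sqrt 3) ^ 3"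
proof -
  show "1 / sqrt 3 > 0" by simp
  show "3 * (1 / sqrt 3) ^ 2 = 1" by (simp add: power_divide)
  have "sqrt 3 ^ 3 = 3 * sqrt 3" by (simp add: power3_eq_cube power2_eq_square[symmetric])
  then show "2 / (3 * sqrt 3) = 2 * (1 / sqrt 3) ^ 3" by (simp add: power_divide)
qed

(* For |a| <= 2 q^3 the interval [-q, q] is invariant, since q^3 + 2 q^3 = q. *)
lemma cubic_orbit_small:
  assumes q: "q > 0" "3 * q ^ 2 = 1" and a: "\<bar>a\<bar> \<le> 2 * q ^ 3"
  shows "\<bar>cubic_orbit a m\<bar> \<le> q"
proof (induction m)
  case 0
  then show ?case using q by simp
next
  case (Suc m)
  have "\<bar>cubic_orbit a m\<bar> ^ 3 \<le> q ^ 3" using Suc by (intro power_mono) auto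
  moreover have "\<bar>cubic_orbit a m ^ 3 + a\<bar> \<le> \<bar>cubic_orbit a m\<bar> ^ 3 + \<bar>a\<bar>"
    by (metis abs_triangle_ineq power_abs)
  moreover have "q ^ 3 + 2 * q ^ 3 = q * (3 * q ^ 2)"
    by (simp add: power3_eq_cube power2_eq_square algebra_simps)
  then have "q ^ 3 + 2 * q ^ 3 = q" using q(2) by simp
  ultimately show ?case using a q(2) unfolding cubic_orbit_Suc by linarith
qed

(* For a > 2 q^3 every step increases the orbit by at least a - 2 q^3, because
   y^3 - y + 2 q^3 = (y - q)^2 (y + 2 q) >= 0 for y >= 0. *)
lemma cubic_orbit_large:
  assumes q: "q > 0" "3 * q ^ 2 = 1" and a: "a > 2 * q ^ 3"
  shows "cubic_orbit a m \<ge> real m * (a - 2 * q ^ 3) \<and> cubic_orbit a m \<ge> 0"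
proof (induction m)
  case 0
  then show ?case by simp
next
  case (Suc m)
  define y where "y = cubic_orbit a m"
  have y: "y \<ge> 0" "y \<ge> real m * (a - 2 * q ^ 3)" using Suc by (simp_all add: y_def)
  have "y ^ 3 - y + 2 * q ^ 3 = (y - q) ^ 2 * (y + 2 * q)"
    using q(2) by (simp add: power2_eq_square power3_eq_cube algebra_simps)
  also have "\<dots> \<ge> 0" using y q by simp
  finally have "y ^ 3 + a \<ge> y + (a - 2 * q ^ 3)" by simp
  then show ?case using a y by (simp add: cubic_orbit_Suc y_def[symmetric] algebra_simps)
qed

lemma cubic_orbit_neg: "cubic_orbit (-a) m = - cubic_orbit a m"
  by (induction m) (simp_all add: cubic_orbit_Suc)

lemma cubic_orbit_bounded_iff:
  "(\<exists>B. \<forall>m\<ge>1. \<bar>cubic_orbit a m\<bar> \<le> B) \<longleftrightarrow> \<bar>a\<bar> \<le> 2 / (3 * sqrt 3)"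
proof -
  define q :: real where "q = 1 / sqrt 3"
  have q: "q > 0" "3 * q ^ 2 = 1" and r: "2 / (3 * sqrt 3) = 2 * q ^ 3"
    using critical_point unfolding q_def by auto
  have unbounded: "\<not> (\<forall>m\<ge>1. cubic_orbit b m \<le> B)" if "b > 2 * q ^ 3" for b B
  proof -
    have "b - 2 * q ^ 3 > 0" using that(1) by simp
    then obtain n where "B < real n * (b - 2 * q ^ 3)"
      using reals_Archimedean3 by blast
    then have "B < cubic_orbit b (Suc n)"
      using cubic_orbit_large[OF q that(1), of "Suc n"] that(1) by (simp add: algebra_simps)
    moreover have "Suc n \<ge> 1" by simp
    ultimately show ?thesis by (metis not_le)
  qed
  show ?thesis
  proof
    assume "\<exists>B. \<forall>m\<ge>1. \<bar>cubic_orbit a m\<bar> \<le> B"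
    then obtain B where B: "\<forall>m\<ge>1. \<bar>cubic_orbit a m\<bar> \<le> B" by blast
    have "\<not> a > 2 * q ^ 3" using unbounded[of a B] B by force
    moreover have "\<not> -a > 2 * q ^ 3"
      using unbounded[of "-a" B] B by (force simp: cubic_orbit_neg)
    ultimately show "\<bar>a\<bar> \<le> 2 / (3 * sqrt 3)" unfolding r by linarith
  next
    assume "\<bar>a\<bar> \<le> 2 / (3 * sqrt 3)"
    then show "\<exists>B. \<forall>m\<ge>1. \<bar>cubic_orbit a m\<bar> \<le> B"
      using cubic_orbit_small[OF q] unfolding r by blast
  qed
qed

lemma octahedron_as_slabs:
  "\<bar>c1\<bar> + \<bar>c4\<bar> + \<bar>c6\<bar> \<le> (R :: real) \<longleftrightarrow>
    (\<forall>s\<in>{-1, 1}. \<forall>t\<in>{-1, 1}. \<bar>c1 + s * c4 + t * c6\<bar> \<le> R)"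
  by (auto simp: abs_if split: if_splits)

lemma tc_of_orbit_bounded_iff:
  "(\<exists>B. \<forall>m\<ge>1. tc_norm ((Q3 (tc_of c1 c4 c6) ^^ m) tc_zero) \<le> B) \<longleftrightarrow>
    \<bar>c1\<bar> + \<bar>c4\<bar> + \<bar>c6\<bar> \<le> 2 / (3 * sqrt 3)"
proof -
  let ?z = "\<lambda>m. (Q3 (tc_of c1 c4 c6) ^^ m) tc_zero"
  have orbit: "s \<in> {-1, 1} \<Longrightarrow> t \<in> {-1, 1} \<Longrightarrow>
      hyperbolic (?z m) \<and> hchar s t (?z m) = cubic_orbit (c1 + s * c4 + t * c6) m" for s t m
    using hchar_orbit[OF _ _ hyperbolic_tc_of] by (simp add: hchar_tc_of)
  have "(\<exists>B. \<forall>m\<ge>1. tc_norm (?z m) \<le> B) \<longleftrightarrow>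
      (\<forall>s\<in>{-1, 1}. \<forall>t\<in>{-1, 1}. \<exists>B. \<forall>m\<ge>1. \<bar>hchar s t (?z m)\<bar> \<le> B)"
    by (rule bounded_iff_hchar_bounded) (use orbit[of 1 1] in simp)
  also have "\<dots> \<longleftrightarrow> (\<forall>s\<in>{-1, 1}. \<forall>t\<in>{-1, 1}.
      \<exists>B. \<forall>m\<ge>1. \<bar>cubic_orbit (c1 + s * c4 + t * c6) m\<bar> \<le> B)"
    using orbit by (intro ball_cong) auto
  also have "\<dots> \<longleftrightarrow> \<bar>c1\<bar> + \<bar>c4\<bar> + \<bar>c6\<bar> \<le> 2 / (3 * sqrt 3)"
    by (simp only: cubic_orbit_bounded_iff octahedron_as_slabs)
  finally show ?thesis .
qed

theorem mainTheorem18: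
  shows "perplexbric =
    {tc_of c1 c4 c6 | c1 c4 c6. \<bar>c1\<bar> + \<bar>c4\<bar> + \<bar>c6\<bar> \<le> 2 / (3 * sqrt 3)}"
  unfolding perplexbric_def by (simp only: tc_of_orbit_bounded_iff)

end
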